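(* Let $V$ be a simple unitary vertex operator algebra, let $b\in V_d$ satisfy energy bounds, let $p\in\mathbb{Z}_{\geq 0}$ and let $a\in V$ be a primary vector of conformal dimension $d_a\neq 1$. Then there are real numbers $C\geq 0$ and $r\geq 0$ such that $$\|(b_{-p}a)_0\|_n\leq C(1+|n|)^r\,\|a_0\|_{n+d}$$ for all $n\in\mathbb{Z}$.
   Context: A simple unitary vertex operator algebra is a vertex operator algebra $V$ (over $\mathbb{C}$) of CFT type, i.e. $V=\bigoplus_{n\geq 0}V_n$ with $V_n=\ker(L_0-n1_V)$ and $V_0=\mathbb{C}\Omega$, with vacuum $\Omega$ and conformal vector $\nu$, $Y(\nu,z)=\sum_{n}L_nz^{-n-2}$, equipped with a scalar product $(\cdot|\cdot)$ with $(\Omega|\Omega)=1$ and an antilinear involution $a\mapsto a^*$ with $\nu^*=\nu$ such that $(b|a_nc)=(a^*_{-n}b|c)$ for all $a,b,c\in V$, $n\in\mathbb{Z}$. For $a\in V$ the modes $a_n$ are defined by $Y(z^{L_0}a,z)=\sum_{n}a_nz^{-n}$. A vector $a$ is primary of conformal dimension $d$ if $a\in V_d$ and $L_ka=0$ for all $k>0$. Write $\|a\|=\sqrt{(a|a)}$, $V_{\leq n}=\bigoplus_{k\leq n}V_k$ (so $V_{\leq n}=\{0\}$ for $n<0$), $\|R\|_n:=\sup\{\|Rb\|: b\in V_{\leq n},\|b\|\leq 1\}\in[0,+\infty]$. A vector $b$ satisfies energy bounds if there are real $s,C,t\geq0$ with $\|b_m\|_n\leq C(1+|m|)^t(1+|n|)^s$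 for all $m,n\in\mathbb{Z}$. *)

theory Defs
  imports "HOL-Analysis.Analysis"
begin

text \<open>
  A vertex operator algebra is given by an abelian group 'v with a complex scalar
  multiplication sc, a mode map md (standard modes: Y(a,z) = sum over n of
  md a n times z to the power -n-1), the vacuum vac and the conformal vector cv.
\<close>

definition Vir :: "('v \<Rightarrow> int \<Rightarrow> 'v \<Rightarrow> 'v) \<Rightarrow> 'v \<Rightarrow> int \<Rightarrow> 'v \<Rightarrow> 'v" where
  "Vir md cv n = md cv (n + 1)"

definition grade_decomp ::
  "(complex \<Rightarrow> 'v::ab_group_add \<Rightarrow> 'v) \<Rightarrow> ('v \<Rightarrow> int \<Rightarrow> 'v \<Rightarrow> 'v) \<Rightarrow> 'v \<Rightarrow> 'v \<Rightarrow> (nat \<Rightarrow> 'v) \<Rightarrow> bool" where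
  "grade_decomp sc md cv v w \<longleftrightarrow>
     (\<forall>j. Vir md cv 0 (w j) = sc (of_nat j) (w j)) \<and> finite {j. w j \<noteq> 0} \<and> v = sum w {j. w j \<noteq> 0}"

definition proj ::
  "(complex \<Rightarrow> 'v::ab_group_add \<Rightarrow> 'v) \<Rightarrow> ('v \<Rightarrow> int \<Rightarrow> 'v \<Rightarrow> 'v) \<Rightarrow> 'v \<Rightarrow> nat \<Rightarrow> 'v \<Rightarrow> 'v" where
  "proj sc md cv k v = (SOME w. grade_decomp sc md cv v w) k"

text \<open>The paper's modes a_n, defined by Y(z^{L0} a, z) = sum_n a_n z^{-n}:
  for a in V_k, a_n = md a (n + k - 1); extended linearly.\<close>
definition pmode ::
  "(complex \<Rightarrow> 'v::ab_group_add \<Rightarrow> 'v) \<Rightarrow> ('v \<Rightarrow> int \<Rightarrow> 'v \<Rightarrow> 'v) \<Rightarrow> 'v \<Rightarrow> 'v \<Rightarrow> int \<Rightarrow> 'v \<Rightarrow> 'v" where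
  "pmode sc md cv a n c = (\<Sum>k | proj sc md cv k a \<noteq> 0. md (proj sc md cv k a) (n + int k - 1) c)"

definition vnorm :: "('v \<Rightarrow> 'v \<Rightarrow> complex) \<Rightarrow> 'v \<Rightarrow> real" where
  "vnorm ip v = sqrt (Re (ip v v))"

definition Vle ::
  "(complex \<Rightarrow> 'v::ab_group_add \<Rightarrow> 'v) \<Rightarrow> ('v \<Rightarrow> int \<Rightarrow> 'v \<Rightarrow> 'v) \<Rightarrow> 'v \<Rightarrow> int \<Rightarrow> 'v set" where
  "Vle sc md cv n = {v. \<forall>k. proj sc md cv k v \<noteq> 0 \<longrightarrow> int k \<le> n}"

definition opnorm ::
  "(complex \<Rightarrow> 'v::ab_group_add \<Rightarrow> 'v) \<Rightarrow> ('v \<Rightarrow> int \<Rightarrow> 'v \<Rightarrow> 'v) \<Rightarrow> 'v \<Rightarrow> ('v \<Rightarrow> 'v \<Rightarrow> complex)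
    \<Rightarrow> int \<Rightarrow> ('v \<Rightarrow> 'v) \<Rightarrow> ereal" where
  "opnorm sc md cv ip n R =
     Sup {ereal (vnorm ip (R b)) | b. b \<in> Vle sc md cv n \<and> vnorm ip b \<le> 1}"

definition is_VOA ::
  "(complex \<Rightarrow> 'v::ab_group_add \<Rightarrow> 'v) \<Rightarrow> ('v \<Rightarrow> int \<Rightarrow> 'v \<Rightarrow> 'v) \<Rightarrow> 'v \<Rightarrow> 'v \<Rightarrow> bool" where
  "is_VOA sc md vac cv \<longleftrightarrow>
     vector_space sc \<and>
     (\<forall>a n. Vector_Spaces.linear sc sc (md a n)) \<and>
     (\<forall>n c. Vector_Spaces.linear sc sc (\<lambda>a. md a n c)) \<and>
     \<comment> \<open>truncation\<close>
     (\<forall>a b. \<exists>N. \<forall>n\<ge>N. md a n b = 0) \<and>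
     \<comment> \<open>vacuum axioms\<close>
     (\<forall>n v. md vac n v = (if n = -1 then v else 0)) \<and>
     (\<forall>a. md a (-1) vac = a \<and> (\<forall>n\<ge>0. md a n vac = 0)) \<and>
     \<comment> \<open>Borcherds (Jacobi) identity; all sums are finite by truncation\<close>
     (\<forall>a b c m n k. \<exists>N0. \<forall>N\<ge>N0.
        (\<Sum>i\<le>N. sc ((of_int m) gchoose i) (md (md a (k + int i) b) (m + n - int i) c)) =
        (\<Sum>i\<le>N. sc ((-1)^i * ((of_int k) gchoose i))
            (md a (m + k - int i) (md b (n + int i) c)
             - sc ((-1) powi k) (md b (n + k - int i) (md a (m + int i) c))))) \<and>
     \<comment> \<open>Virasoro relations with some central charge\<close>
     (\<exists>cc::complex. \<forall>m n v.
        Vir md cv m (Vir md cv n v) - Vir md cv n (Vir md cv m v) =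
        sc (of_int (m - n)) (Vir md cv (m + n) v)
        + (if m + n = 0 then sc (cc / 12 * (of_int m ^ 3 - of_int m)) v else 0)) \<and>
     \<comment> \<open>translation: L_{-1} is the derivation\<close>
     (\<forall>a n v. md (Vir md cv (-1) a) n v = sc (- of_int n) (md a (n - 1) v)) \<and>
     \<comment> \<open>grading by L_0 with nonnegative integer eigenvalues\<close>
     (\<forall>v. \<exists>w. grade_decomp sc md cv v w) \<and>
     \<comment> \<open>finite-dimensional homogeneous subspaces\<close>
     (\<forall>k::nat. \<exists>B. finite B \<and> module.span sc B = {v. Vir md cv 0 v = sc (of_nat k) v})"

definition is_simple_unitary_CFT_VOA ::
  "(complex \<Rightarrow> 'v::ab_group_add \<Rightarrow> 'v) \<Rightarrow> ('v \<Rightarrow> int \<Rightarrow> 'v \<Rightarrow> 'v) \<Rightarrow> 'v \<Rightarrow> 'v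
    \<Rightarrow> ('v \<Rightarrow> 'v \<Rightarrow> complex) \<Rightarrow> ('v \<Rightarrow> 'v) \<Rightarrow> bool" where
  "is_simple_unitary_CFT_VOA sc md vac cv ip star \<longleftrightarrow>
     is_VOA sc md vac cv \<and>
     \<comment> \<open>CFT type: V_0 = C vac\<close>
     {v. Vir md cv 0 v = 0} = {sc c vac | c. True} \<and>
     \<comment> \<open>simple: no nontrivial ideals\<close>
     (\<forall>I. module.subspace sc I \<and> (\<forall>a n x. x \<in> I \<longrightarrow> md a n x \<in> I) \<longrightarrow> I = {0} \<or> I = UNIV) \<and>
     \<comment> \<open>scalar product: linear in the first, antilinear in the second variable\<close>
     (\<forall>x y z. ip (x + y) z = ip x z + ip y z) \<and>
     (\<forall>c x y. ip (sc c x) y = c * ip x y) \<and>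
     (\<forall>x y. ip y x = cnj (ip x y)) \<and>
     (\<forall>x. ip x x \<in> \<real> \<and> Re (ip x x) \<ge> 0 \<and> (ip x x = 0 \<longleftrightarrow> x = 0)) \<and>
     ip vac vac = 1 \<and>
     \<comment> \<open>antilinear involution\<close>
     (\<forall>x y. star (x + y) = star x + star y) \<and>
     (\<forall>c x. star (sc c x) = sc (cnj c) (star x)) \<and>
     (\<forall>x. star (star x) = x) \<and>
     star cv = cv \<and>
     \<comment> \<open>invariance\<close>
     (\<forall>a b c n. ip b (pmode sc md cv a n c) = ip (pmode sc md cv (star a) (- n) b) c)"

definition primary ::
  "(complex \<Rightarrow> 'v::ab_group_add \<Rightarrow> 'v) \<Rightarrow> ('v \<Rightarrow> int \<Rightarrow> 'v \<Rightarrow> 'v) \<Rightarrow> 'v \<Rightarrow> 'v \<Rightarrow> nat \<Rightarrow> bool" where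
  "primary sc md cv a d \<longleftrightarrow> Vir md cv 0 a = sc (of_nat d) a \<and> (\<forall>k>0. Vir md cv k a = 0)"

definition energy_bounded ::
  "(complex \<Rightarrow> 'v::ab_group_add \<Rightarrow> 'v) \<Rightarrow> ('v \<Rightarrow> int \<Rightarrow> 'v \<Rightarrow> 'v) \<Rightarrow> 'v \<Rightarrow> ('v \<Rightarrow> 'v \<Rightarrow> complex)
    \<Rightarrow> 'v \<Rightarrow> bool" where
  "energy_bounded sc md cv ip b \<longleftrightarrow>
     (\<exists>s C t::real. s \<ge> 0 \<and> C \<ge> 0 \<and> t \<ge> 0 \<and>
        (\<forall>m n::int. opnorm sc md cv ip n (pmode sc md cv b m)
            \<le> ereal (C * (1 + \<bar>real_of_int m\<bar>) powr t * (1 + \<bar>real_of_int n\<bar>) powr s)))"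

end

theory Submission
  imports Defs
begin

text \<open>
  By the Borcherds identity, (b_{-p} a)_0 applied to a vector c of energy at most n is a
  finite sum, over i \<le> n + d, of terms b_{k-i} a_{q+i} c and a_{q+k-i} b_i c whose binomial
  coefficients grow polynomially in i; the modes of b are controlled by its energy bounds.
  Every mode a_j of the primary vector a is controlled by a_0: as a is primary,
  [L_j, a_0] = j (d_a - 1) a_j with d_a \<noteq> 1, so it suffices to bound L_j on V_{\<le> N}
  polynomially in j and N. That bound follows from unitarity and the Virasoro relations,
  by induction on N, since L_j lowers the energy by j.
\<close>

lemma sum_atMost_only_first:
  fixes f :: "nat \<Rightarrow> 'a::comm_monoid_add"
  assumes "\<forall>i\<ge>1. f i = 0"
  shows "(\<Sum>i\<le>N. f i) = f 0"
  using sum.mono_neutral_right[of "{..N}" "{0}" f] assms by auto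

lemma sum_atMost_only_first_two:
  fixes f :: "nat \<Rightarrow> 'a::comm_monoid_add"
  assumes "\<forall>i\<ge>2. f i = 0" "N \<ge> 1"
  shows "(\<Sum>i\<le>N. f i) = f 0 + f 1"
  using sum.mono_neutral_right[of "{..N}" "{0, 1}" f] assms by auto

lemma sq_le_of_mult_bound:
  fixes u v w G :: real
  assumes "u ^ 2 \<le> w * v" "v ^ 2 \<le> G * u ^ 2" "0 \<le> u" "0 \<le> v" "0 \<le> w" "0 \<le> G"
  shows "u ^ 2 \<le> G * w ^ 2"
proof (cases "u = 0")
  case True
  then show ?thesis
    using assms(6) by simp
next
  case False
  have "(u ^ 2) ^ 2 \<le> (w * v) ^ 2"
    using assms(1,3) by (intro power_mono) auto
  also have "\<dots> = w ^ 2 * v ^ 2"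
    by (simp add: power_mult_distrib)
  also have "\<dots> \<le> w ^ 2 * (G * u ^ 2)"
    using assms(2) by (rule mult_left_mono) simp
  also have "\<dots> = (G * w ^ 2) * u ^ 2"
    by (simp only: ac_simps)
  finally have "u ^ 2 * u ^ 2 \<le> (G * w ^ 2) * u ^ 2"
    by (simp only: power2_eq_square[of "u ^ 2"])
  then show ?thesis
    by (rule mult_right_le_imp_le) (use False assms(3) in simp)
qed

lemma gbinomial_Suc_mult:
  fixes a :: "'a::field_char_0"
  shows "of_nat (Suc i) * (a gchoose Suc i) = (a - of_nat i) * (a gchoose i)"
  by (simp only: gbinomial_absorption gbinomial_absorb_comp)

lemma norm_gbinomial_of_int_le: "cmod ((of_int k :: complex) gchoose i) \<le> (real i + 1) ^ nat \<bar>k\<bar>"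
proof (induction i)
  case 0
  then show ?case by simp
next
  case (Suc i)
  define K where "K = nat \<bar>k\<bar>"
  have "real (Suc i) * cmod ((of_int k :: complex) gchoose Suc i)
      = cmod (of_int k - of_nat i :: complex) * cmod (of_int k gchoose i :: complex)"
    using arg_cong[OF gbinomial_Suc_mult[of i "of_int k :: complex"], of cmod]
      norm_of_nat[of "Suc i", where 'a=complex]
    by (simp add: norm_mult add.commute del: of_nat_Suc)
  also have "\<dots> \<le> (real K + real i) * (real i + 1) ^ K"
  proof (rule mult_mono)
    have "cmod (of_int k - of_nat i :: complex) = \<bar>real_of_int k - real i\<bar>"
      by (metis norm_of_real of_real_diff of_real_of_int_eq of_real_of_nat_eq)
    then show "cmod (of_int k - of_nat i :: complex) \<le> real K + real i"
      unfolding K_def by simp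
  qed (use Suc.IH K_def in auto)
  also have "\<dots> \<le> (real i + 1) * (real i + 2) ^ K"
  proof -
    have "(real K + real i) / (real i + 1) \<le> 1 + real K * (1 / (real i + 1))"
      by (simp add: field_simps)
    also have "\<dots> \<le> (1 + 1 / (real i + 1)) ^ K"
      by (rule Bernoulli_inequality) (simp add: order_trans[of _ 0])
    also have "1 + 1 / (real i + 1) = (real i + 2) / (real i + 1)"
      by (simp add: field_simps)
    finally have "(real i + 1) ^ K * ((real K + real i) / (real i + 1))
        \<le> (real i + 1) ^ K * ((real i + 2) / (real i + 1)) ^ K"
      by (rule mult_left_mono) simp
    also have "\<dots> = (real i + 2) ^ K"
      by (simp add: power_divide)
    finally show ?thesis
      by (simp add: field_simps)
  qed
  finally show ?case
    unfolding K_def by (simp add: add.commute mult_le_cancel_left_pos)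
qed

lemma one_le_norm_of_int: "z \<noteq> 0 \<Longrightarrow> 1 \<le> norm (of_int z :: 'a::real_normed_div_algebra)"
  by (metis norm_of_int of_int_1_le_iff of_int_abs int_one_le_iff_zero_less zero_less_abs_iff)

definition polynomially_bounded :: "(nat \<Rightarrow> real) \<Rightarrow> bool" where
  "polynomially_bounded f \<longleftrightarrow> (\<exists>C r. C \<ge> 0 \<and> r \<ge> 0 \<and> (\<forall>n. \<bar>f n\<bar> \<le> C * (1 + real n) powr r))"

lemma polynomially_boundedI:
  "C \<ge> 0 \<Longrightarrow> r \<ge> 0 \<Longrightarrow> (\<And>n. \<bar>f n\<bar> \<le> C * (1 + real n) powr r) \<Longrightarrow> polynomially_bounded f"
  unfolding polynomially_bounded_def by blast

lemma polynomially_bounded_const: "polynomially_bounded (\<lambda>_. c)"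
  by (rule polynomially_boundedI[of "\<bar>c\<bar>" 0]) auto

lemma polynomially_bounded_of_nat: "polynomially_bounded (\<lambda>n. real n)"
  by (rule polynomially_boundedI[of 1 1]) auto

lemma polynomially_bounded_add:
  assumes "polynomially_bounded f" "polynomially_bounded g"
  shows "polynomially_bounded (\<lambda>n. f n + g n)"
proof -
  obtain C r D q where C: "C \<ge> 0" "r \<ge> 0" "\<And>n. \<bar>f n\<bar> \<le> C * (1 + real n) powr r"
    and D: "D \<ge> 0" "q \<ge> 0" "\<And>n. \<bar>g n\<bar> \<le> D * (1 + real n) powr q"
    using assms unfolding polynomially_bounded_def by blast
  show ?thesis
  proof (rule polynomially_boundedI[of "C + D" "max r q"])
    fix n
    have "(1 + real n) powr r \<le> (1 + real n) powr max r q" "(1 + real n) powr q \<le> (1 + real n) powr max r q"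
      by (auto intro: powr_mono)
    then have "C * (1 + real n) powr r + D * (1 + real n) powr q \<le> (C + D) * (1 + real n) powr max r q"
      using C(1) D(1) by (simp add: distrib_right add_mono mult_left_mono)
    then show "\<bar>f n + g n\<bar> \<le> (C + D) * (1 + real n) powr max r q"
      using C(3)[of n] D(3)[of n] by linarith
  qed (use C D in auto)
qed

lemma polynomially_bounded_mult:
  assumes "polynomially_bounded f" "polynomially_bounded g"
  shows "polynomially_bounded (\<lambda>n. f n * g n)"
proof -
  obtain C r D q where C: "C \<ge> 0" "r \<ge> 0" "\<And>n. \<bar>f n\<bar> \<le> C * (1 + real n) powr r"
    and D: "D \<ge> 0" "q \<ge> 0" "\<And>n. \<bar>g n\<bar> \<le> D * (1 + real n) powr q"
    using assms unfolding polynomially_bounded_def by blast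
  show ?thesis
  proof (rule polynomially_boundedI[of "C * D" "r + q"])
    fix n
    have "\<bar>f n * g n\<bar> \<le> (C * (1 + real n) powr r) * (D * (1 + real n) powr q)"
      unfolding abs_mult using C(3)[of n] D(3)[of n] by (intro mult_mono) auto
    then show "\<bar>f n * g n\<bar> \<le> C * D * (1 + real n) powr (r + q)"
      by (simp add: powr_add algebra_simps)
  qed (use C D in auto)
qed

lemma polynomially_bounded_power:
  "polynomially_bounded f \<Longrightarrow> polynomially_bounded (\<lambda>n. f n ^ k)"
  by (induction k) (simp_all add: polynomially_bounded_const polynomially_bounded_mult)

lemma polynomially_bounded_shifted_powr:
  assumes "c \<ge> 0" "t \<ge> 0"
  shows "polynomially_bounded (\<lambda>n. (real n + c) powr t)"
proof (rule polynomially_boundedI[of "(1 + c) powr t" t])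
  fix n
  have "real n + c \<le> (1 + c) * (1 + real n)"
    using assms(1) by (simp add: algebra_simps)
  then have "(real n + c) powr t \<le> ((1 + c) * (1 + real n)) powr t"
    using assms by (intro powr_mono2) auto
  then show "\<bar>(real n + c) powr t\<bar> \<le> (1 + c) powr t * (1 + real n) powr t"
    using assms(1) by (simp add: powr_mult)
qed (use assms in auto)

lemmas polynomially_bounded_intros =
  polynomially_bounded_const polynomially_bounded_of_nat polynomially_bounded_add
  polynomially_bounded_mult polynomially_bounded_power polynomially_bounded_shifted_powr

locale unitary_voa =
  fixes sc :: "complex \<Rightarrow> 'v::ab_group_add \<Rightarrow> 'v"
    and md :: "'v \<Rightarrow> int \<Rightarrow> 'v \<Rightarrow> 'v"
    and vac cv :: 'v
    and ip :: "'v \<Rightarrow> 'v \<Rightarrow> complex"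
    and star :: "'v \<Rightarrow> 'v"
  assumes vector_space_sc: "vector_space sc"
    and linear_md: "Vector_Spaces.linear sc sc (md a n)"
    and linear_md_left: "Vector_Spaces.linear sc sc (\<lambda>a. md a n c)"
    and md_vac: "md a (-1) vac = a"
    and borcherds: "\<And>a b c m n k. \<exists>N0. \<forall>N\<ge>N0.
        (\<Sum>i\<le>N. sc ((of_int m) gchoose i) (md (md a (k + int i) b) (m + n - int i) c)) =
        (\<Sum>i\<le>N. sc ((-1)^i * ((of_int k) gchoose i))
            (md a (m + k - int i) (md b (n + int i) c)
             - sc ((-1) powi k) (md b (n + k - int i) (md a (m + int i) c))))"
    and virasoro: "\<exists>cc::complex. \<forall>m n v.
        Vir md cv m (Vir md cv n v) - Vir md cv n (Vir md cv m v) =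
        sc (of_int (m - n)) (Vir md cv (m + n) v)
        + (if m + n = 0 then sc (cc / 12 * (of_int m ^ 3 - of_int m)) v else 0)"
    and translation: "md (Vir md cv (-1) a) n v = sc (- of_int n) (md a (n - 1) v)"
    and grading: "\<exists>w. grade_decomp sc md cv v w"
    and ip_add_left: "ip (x + y) z = ip x z + ip y z"
    and ip_scale_left: "\<And>c x y. ip (sc c x) y = c * ip x y"
    and ip_commute_cnj: "\<And>x y. ip y x = cnj (ip x y)"
    and ip_self_real: "ip x x \<in> \<real>"
    and ip_self_nonneg: "Re (ip x x) \<ge> 0"
    and ip_self_eq_0: "ip x x = 0 \<longleftrightarrow> x = 0"
    and star_cv: "star cv = cv"
    and invariance: "\<And>a b c n. ip b (pmode sc md cv a n c) = ip (pmode sc md cv (star a) (- n) b) c"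

lemma unitary_voa_if_simple_unitary_CFT_VOA:
  assumes "is_simple_unitary_CFT_VOA sc md vac cv ip star"
  shows "unitary_voa sc md vac cv ip star"
  using assms unfolding unitary_voa_def is_simple_unitary_CFT_VOA_def is_VOA_def
  \<comment> \<open>conjugate symmetry is dropped before simp, on which it would loop\<close>
  by (elim conjE) (intro conjI; (assumption | (thin_tac "\<forall>x y. ip y x = cnj (ip x y)", simp)))

context unitary_voa
begin

sublocale vector_space sc
  by (rule vector_space_sc)

sublocale md: module_hom sc sc "md a n" for a n
  using linear_md by (simp add: linear_iff_module_hom)

sublocale md_left: module_hom sc sc "\<lambda>a. md a n c" for n c
  using linear_md_left by (simp add: linear_iff_module_hom)

abbreviation L :: "int \<Rightarrow> 'v \<Rightarrow> 'v" where "L \<equiv> Vir md cv"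
abbreviation grade :: "nat \<Rightarrow> 'v \<Rightarrow> 'v" where "grade \<equiv> proj sc md cv"
abbreviation V_le :: "int \<Rightarrow> 'v set" where "V_le \<equiv> Vle sc md cv"
abbreviation vn :: "'v \<Rightarrow> real" where "vn \<equiv> vnorm ip"
abbreviation opn :: "int \<Rightarrow> ('v \<Rightarrow> 'v) \<Rightarrow> ereal" where "opn \<equiv> opnorm sc md cv ip"

lemma L_eq_md: "L n = md cv (n + 1)"
  by (simp add: Vir_def)

sublocale L: module_hom sc sc "L n" for n
  unfolding L_eq_md by (rule md.module_hom_axioms)

definition homogeneous :: "nat \<Rightarrow> 'v \<Rightarrow> bool" where
  "homogeneous k v \<longleftrightarrow> L 0 v = sc (of_nat k) v"

lemma homogeneous_scale: "homogeneous k v \<Longrightarrow> homogeneous k (sc r v)"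
  by (simp add: homogeneous_def L.scale mult.commute)

subsection \<open>The grading\<close>

lemma L0_eigenvectors_independent:
  assumes "finite S" "\<forall>j\<in>S. homogeneous j (w j)" "(\<Sum>j\<in>S. w j) = 0"
  shows "\<forall>j\<in>S. w j = 0"
  using assms
proof (induction S arbitrary: w rule: finite_induct)
  case empty
  then show ?case by simp
next
  case (insert j0 S)
  define w' where "w' j = sc (of_nat j - of_nat j0) (w j)" for j
  have "L 0 (\<Sum>j\<in>insert j0 S. w j) - sc (of_nat j0) (\<Sum>j\<in>insert j0 S. w j) = 0"
    using insert.prems(2) by simp
  then have "(\<Sum>j\<in>insert j0 S. L 0 (w j) - sc (of_nat j0) (w j)) = 0"
    by (simp only: L.sum scale_sum_right sum_subtractf)
  then have "(\<Sum>j\<in>S. w' j) = 0"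
    using insert.prems(1) insert.hyps by (simp add: w'_def homogeneous_def scale_left_diff_distrib)
  moreover have "\<forall>j\<in>S. homogeneous j (w' j)"
    using insert.prems(1) by (simp add: w'_def homogeneous_scale)
  ultimately have "\<forall>j\<in>S. w' j = 0"
    using insert.IH by blast
  moreover have "(of_nat j - of_nat j0 :: complex) \<noteq> 0" if "j \<in> S" for j
    using that insert.hyps by auto
  ultimately have "\<forall>j\<in>S. w j = 0"
    by (simp add: w'_def scale_eq_0_iff)
  moreover from this have "w j0 = 0"
    using insert.prems(2) insert.hyps by simp
  ultimately show ?case by simp
qed

lemma grade_decompI:
  assumes "\<forall>j. homogeneous j (w j)" "finite S" "\<forall>j. j \<notin> S \<longrightarrow> w j = 0" "v = sum w S"
  shows "grade_decomp sc md cv v w"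
  unfolding grade_decomp_def
proof (intro conjI)
  show "finite {j. w j \<noteq> 0}"
    using assms(2,3) by (metis (mono_tags) finite_subset mem_Collect_eq subsetI)
  have "sum w S = sum w {j. w j \<noteq> 0}"
    by (rule sum.mono_neutral_right[OF assms(2)]) (use assms(3) in auto)
  then show "v = sum w {j. w j \<noteq> 0}"
    using assms(4) by simp
qed (use assms(1) homogeneous_def in blast)

lemma grade_decomp_unique:
  assumes "grade_decomp sc md cv v w1" "grade_decomp sc md cv v w2"
  shows "w1 = w2"
proof
  fix j
  define S where "S = {j. w1 j \<noteq> 0} \<union> {j. w2 j \<noteq> 0}"
  have S: "finite S"
    using assms unfolding S_def grade_decomp_def by blast
  have "sum w1 {j. w1 j \<noteq> 0} = sum w1 S"
    by (rule sum.mono_neutral_left[OF S]) (auto simp: S_def)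
  moreover have "sum w2 {j. w2 j \<noteq> 0} = sum w2 S"
    by (rule sum.mono_neutral_left[OF S]) (auto simp: S_def)
  ultimately have "(\<Sum>j\<in>S. w1 j - w2 j) = 0"
    using assms unfolding grade_decomp_def sum_subtractf by (metis diff_self)
  moreover have "\<forall>j\<in>S. homogeneous j (w1 j - w2 j)"
    using assms unfolding grade_decomp_def homogeneous_def by (simp add: L.diff scale_right_diff_distrib)
  ultimately have "\<forall>j\<in>S. w1 j - w2 j = 0"
    by (rule L0_eigenvectors_independent[OF S, of "\<lambda>j. w1 j - w2 j", rotated])
  then show "w1 j = w2 j"
    unfolding S_def by (metis (mono_tags) UnCI mem_Collect_eq right_minus_eq)
qed

lemma grade_decomp_grade: "grade_decomp sc md cv v (\<lambda>k. grade k v)"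
proof -
  have "grade_decomp sc md cv v (SOME w. grade_decomp sc md cv v w)"
    using grading by (rule someI_ex)
  then show ?thesis
    unfolding proj_def by simp
qed

lemma grade_eq: "grade_decomp sc md cv v w \<Longrightarrow> grade k v = w k"
  using grade_decomp_unique[OF grade_decomp_grade] by metis

lemma homogeneous_grade: "homogeneous k (grade k v)"
  using grade_decomp_grade unfolding grade_decomp_def homogeneous_def by blast

lemma finite_grades: "finite {k. grade k v \<noteq> 0}"
  using grade_decomp_grade unfolding grade_decomp_def by blast

lemma sum_grades:
  assumes "finite S" "\<forall>k. k \<notin> S \<longrightarrow> grade k v = 0"
  shows "v = (\<Sum>k\<in>S. grade k v)"
proof -
  have "v = (\<Sum>k | grade k v \<noteq> 0. grade k v)"
    using grade_decomp_grade[of v] unfolding grade_decomp_def by blast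
  also have "\<dots> = (\<Sum>k\<in>S. grade k v)"
    by (rule sum.mono_neutral_left) (use assms in auto)
  finally show ?thesis .
qed

lemma grade_add: "grade k (x + y) = grade k x + grade k y"
proof (rule grade_eq, rule grade_decompI)
  let ?S = "{k. grade k x \<noteq> 0} \<union> {k. grade k y \<noteq> 0}"
  show "finite ?S"
    using finite_grades by simp
  have "(\<Sum>k\<in>?S. grade k x) = x" "(\<Sum>k\<in>?S. grade k y) = y"
    by (rule sum_grades[symmetric]; use finite_grades in auto)+
  then show "x + y = (\<Sum>k\<in>?S. grade k x + grade k y)"
    by (simp add: sum.distrib)
  show "\<forall>j. homogeneous j (grade j x + grade j y)"
    using homogeneous_grade by (simp add: homogeneous_def L.add scale_right_distrib)
qed auto

lemma grade_scale: "grade k (sc r x) = sc r (grade k x)"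
proof (rule grade_eq, rule grade_decompI)
  let ?S = "{k. grade k x \<noteq> 0}"
  show "finite ?S"
    by (rule finite_grades)
  have "x = (\<Sum>k\<in>?S. grade k x)"
    by (rule sum_grades) (use finite_grades in auto)
  then show "sc r x = (\<Sum>k\<in>?S. sc r (grade k x))"
    by (metis scale_sum_right)
qed (auto simp: homogeneous_scale homogeneous_grade)

sublocale grade: module_hom sc sc "grade k" for k
  by unfold_locales (simp_all add: grade_add grade_scale)

lemma grade_homogeneous: "homogeneous j v \<Longrightarrow> grade k v = (if k = j then v else 0)"
  by (rule grade_eq, rule grade_decompI[where S="{j}"]) (auto simp: homogeneous_def)

lemma grade_grade: "grade k (grade j x) = (if k = j then grade j x else 0)"
  using grade_homogeneous[OF homogeneous_grade] by simp

lemma L0_eigenvector_eq_0: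
  assumes "L 0 v = sc c v" "\<forall>k. c \<noteq> of_nat k"
  shows "v = 0"
proof -
  let ?S = "{k. grade k v \<noteq> 0}"
  have S: "finite ?S" by (rule finite_grades)
  have v: "v = (\<Sum>k\<in>?S. grade k v)"
    by (rule sum_grades) (use S in auto)
  have "L 0 v - sc c v = 0"
    using assms by simp
  then have "(\<Sum>k\<in>?S. sc (of_nat k - c) (grade k v)) = 0"
    using homogeneous_grade
    by (subst (asm) (1 2) v) (simp add: L.sum scale_sum_right sum_subtractf homogeneous_def scale_left_diff_distrib)
  moreover have "\<forall>j\<in>?S. homogeneous j (sc (of_nat j - c) (grade j v))"
    by (simp add: homogeneous_grade homogeneous_scale)
  ultimately have "\<forall>j\<in>?S. sc (of_nat j - c) (grade j v) = 0"
    by (rule L0_eigenvectors_independent[OF S, of "\<lambda>j. sc (of_nat j - c) (grade j v)", rotated])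
  moreover have "of_nat j - c \<noteq> 0" for j
    using assms(2) by auto
  ultimately show ?thesis
    using v by (simp add: scale_eq_0_iff)
qed

lemma V_le_iff: "v \<in> V_le N \<longleftrightarrow> (\<forall>k. grade k v \<noteq> 0 \<longrightarrow> int k \<le> N)"
  unfolding Vle_def by simp

lemma subspace_V_le: "subspace (V_le N)"
  by (auto simp: subspace_def V_le_iff grade.add grade.scale) (metis add_0)

lemma V_le_mono: "x \<in> V_le N \<Longrightarrow> N \<le> M \<Longrightarrow> x \<in> V_le M"
  unfolding V_le_iff by force

lemma homogeneous_in_V_le: "homogeneous k v \<Longrightarrow> v \<in> V_le (int k)"
  unfolding V_le_iff using grade_homogeneous by auto

lemma V_le_negative: "x \<in> V_le N \<Longrightarrow> N < 0 \<Longrightarrow> x = 0"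
  using sum_grades[of "{}" x] unfolding V_le_iff by force

lemma V_le_sum_grades: "x \<in> V_le (int N) \<Longrightarrow> x = (\<Sum>k\<le>N. grade k x)"
  by (rule sum_grades) (auto simp: V_le_iff)

lemma L0_eigenvector_in_V_le:
  assumes "L 0 v = sc (of_int z) v"
  shows "v \<in> V_le z"
proof (cases "z < 0")
  case True
  then have "\<forall>k. (of_int z :: complex) \<noteq> of_nat k"
    by (metis of_int_of_nat_eq of_int_eq_iff of_nat_less_0_iff)
  then show ?thesis
    using L0_eigenvector_eq_0[OF assms] subspace_0[OF subspace_V_le] by simp
next
  case False
  then have "homogeneous (nat z) v"
    using assms unfolding homogeneous_def by simp
  then show ?thesis
    using homogeneous_in_V_le False by fastforce
qed

subsection \<open>Virasoro modes and the degree of modes\<close>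

lemma commutator_formula:
  "\<exists>N0. \<forall>N\<ge>N0.
     (\<Sum>i\<le>N. sc (of_int m gchoose i) (md (md x (int i) y) (m + n - int i) c))
     = md x m (md y n c) - md y n (md x m c)"
proof -
  obtain N0 where N0: "\<forall>N\<ge>N0.
      (\<Sum>i\<le>N. sc (of_int m gchoose i) (md (md x (0 + int i) y) (m + n - int i) c)) =
      (\<Sum>i\<le>N. sc ((-1)^i * (of_int 0 gchoose i))
          (md x (m + 0 - int i) (md y (n + int i) c)
           - sc ((-1) powi 0) (md y (n + 0 - int i) (md x (m + int i) c))))"
    using borcherds[where a=x and b=y and c=c and m=m and n=n and k=0] by blast
  have "(\<Sum>i\<le>N. sc ((-1)^i * (of_int 0 gchoose i))
          (md x (m + 0 - int i) (md y (n + int i) c)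
           - sc ((-1) powi 0) (md y (n + 0 - int i) (md x (m + int i) c))))
        = md x m (md y n c) - md y n (md x m c)" for N
    by (subst sum_atMost_only_first) (auto simp: gbinomial_0_left)
  with N0 show ?thesis by auto
qed

lemma commutator_formula_two_terms:
  assumes "\<forall>i\<ge>2. (of_int m gchoose i :: complex) = 0 \<or> md x (int i) y = 0"
  shows "md x m (md y n c) - md y n (md x m c)
     = md (md x 0 y) (m + n) c + sc (of_int m) (md (md x 1 y) (m + n - 1) c)"
proof -
  obtain N0 where N0: "\<forall>N\<ge>N0.
      (\<Sum>i\<le>N. sc (of_int m gchoose i) (md (md x (int i) y) (m + n - int i) c))
      = md x m (md y n c) - md y n (md x m c)"
    using commutator_formula by blast
  then have "md x m (md y n c) - md y n (md x m c) =
      (\<Sum>i\<le>max N0 1. sc (of_int m gchoose i) (md (md x (int i) y) (m + n - int i) c))"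
    by simp
  also have "\<dots> = md (md x 0 y) (m + n) c + sc (of_int m) (md (md x 1 y) (m + n - 1) c)"
    by (subst sum_atMost_only_first_two) (use assms in auto)
  finally show ?thesis .
qed

lemma L0_commutator:
  "L 0 (md x n c) - md x n (L 0 c) = md (L 0 x) n c - sc (of_int n + 1) (md x n c)"
proof -
  have "(of_int 1 gchoose i :: complex) = 0" if "i \<ge> 2" for i
    using that binomial_gbinomial[of 1 i] by (simp add: binomial_eq_0)
  then have "md cv 1 (md x n c) - md x n (md cv 1 c)
      = md (md cv 0 x) (1 + n) c + sc (of_int 1) (md (md cv 1 x) (1 + n - 1) c)"
    by (intro commutator_formula_two_terms) simp
  moreover have "md (L (-1) x) (1 + n) c = sc (- of_int (1 + n)) (md x n c)"
    by (simp add: translation)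
  ultimately show ?thesis
    by (simp add: L_eq_md algebra_simps scale_left_distrib scale_minus_left)
qed

definition central_charge :: complex where
  "central_charge = (SOME cc. \<forall>m n v. L m (L n v) - L n (L m v) =
      sc (of_int (m - n)) (L (m + n) v)
      + (if m + n = 0 then sc (cc / 12 * (of_int m ^ 3 - of_int m)) v else 0))"

lemma virasoro_bracket:
  "L m (L n v) - L n (L m v) = sc (of_int (m - n)) (L (m + n) v)
     + (if m + n = 0 then sc (central_charge / 12 * (of_int m ^ 3 - of_int m)) v else 0)"
proof -
  have "\<forall>m n v. L m (L n v) - L n (L m v) = sc (of_int (m - n)) (L (m + n) v)
     + (if m + n = 0 then sc (central_charge / 12 * (of_int m ^ 3 - of_int m)) v else 0)"
    unfolding central_charge_def using virasoro by (rule someI_ex)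
  then show ?thesis by blast
qed

lemma homogeneous_cv: "homogeneous 2 cv"
proof -
  have "md (L 0 cv) (-1) vac = L 0 (L (-2) vac) - L (-2) (L 0 vac)"
    using L0_commutator[of cv "-1" vac] by (simp add: L_eq_md)
  also have "\<dots> = sc 2 (L (-2) vac)"
    using virasoro_bracket[of 0 "-2" vac] by simp
  finally show ?thesis
    unfolding homogeneous_def by (simp add: L_eq_md md_vac)
qed

lemma L0_md_homogeneous:
  assumes "homogeneous dx x" "homogeneous e c"
  shows "L 0 (md x n c) = sc (of_int (int e + int dx - n - 1)) (md x n c)"
proof -
  have "L 0 (md x n c) = md x n (L 0 c) + (md (L 0 x) n c - sc (of_int n + 1) (md x n c))"
    using L0_commutator[of x n c] by (simp add: algebra_simps)
  also have "\<dots> = sc (of_nat e + of_nat dx - (of_int n + 1)) (md x n c)"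
    using assms unfolding homogeneous_def
    by (simp add: md.scale md_left.scale scale_left_distrib scale_left_diff_distrib)
  finally show ?thesis by simp
qed

lemma md_V_le:
  assumes "homogeneous dx x" "c \<in> V_le M"
  shows "md x n c \<in> V_le (M + int dx - n - 1)"
proof (cases "M < 0")
  case True
  then show ?thesis
    using V_le_negative[OF assms(2)] subspace_0[OF subspace_V_le] by simp
next
  case False
  then obtain N where N: "M = int N"
    by (metis nonneg_int_cases not_less)
  have "md x n c = (\<Sum>k\<le>N. md x n (grade k c))"
    using V_le_sum_grades assms(2) N md.sum by metis
  also have "\<dots> \<in> V_le (M + int dx - n - 1)"
  proof (rule subspace_sum[OF subspace_V_le])
    fix k assume "k \<in> {..N}"
    then have "int k + int dx - n - 1 \<le> M + int dx - n - 1"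
      using N by simp
    moreover have "md x n (grade k c) \<in> V_le (int k + int dx - n - 1)"
      by (rule L0_eigenvector_in_V_le) (rule L0_md_homogeneous[OF assms(1) homogeneous_grade])
    ultimately show "md x n (grade k c) \<in> V_le (M + int dx - n - 1)"
      by (rule V_le_mono[rotated])
  qed
  finally show ?thesis .
qed

lemma L_V_le: "c \<in> V_le M \<Longrightarrow> L m c \<in> V_le (M - m)"
  using md_V_le[OF homogeneous_cv, of c M "m + 1"] by (simp add: L_eq_md)

lemma pmode_homogeneous:
  assumes "homogeneous k x"
  shows "pmode sc md cv x n = md x (n + int k - 1)"
proof (cases "x = 0")
  case True
  then show ?thesis
    by (auto simp: pmode_def)
next
  case False
  then have "{j. grade j x \<noteq> 0} = {k}"
    using grade_homogeneous[OF assms] by auto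
  then show ?thesis
    using grade_homogeneous[OF assms] by (auto simp: pmode_def)
qed

lemma pmode_cv: "pmode sc md cv cv n = L n"
  using pmode_homogeneous[OF homogeneous_cv] by (simp add: L_eq_md add.commute)

subsection \<open>The scalar product\<close>

lemma ip_add_right: "ip z (x + y) = ip z x + ip z y"
  by (metis complex_cnj_add ip_add_left ip_commute_cnj)

lemma ip_scale_right: "ip x (sc c y) = cnj c * ip x y"
  by (metis complex_cnj_mult ip_commute_cnj ip_scale_left)

lemma ip_zero_left [simp]: "ip 0 y = 0"
  using ip_scale_left[of 0 0 y] by simp

lemma ip_zero_right [simp]: "ip y 0 = 0"
  using ip_scale_right[of y 0 0] by simp

lemma ip_diff_left: "ip (x - y) z = ip x z - ip y z"
  by (metis add_diff_cancel diff_add_cancel ip_add_left)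

lemma ip_diff_right: "ip z (x - y) = ip z x - ip z y"
  by (metis add_diff_cancel diff_add_cancel ip_add_right)

lemma ip_sum_left: "ip (sum f A) y = (\<Sum>i\<in>A. ip (f i) y)"
  by (induct A rule: infinite_finite_induct) (auto simp: ip_add_left)

lemma ip_sum_right: "ip y (sum f A) = (\<Sum>i\<in>A. ip y (f i))"
  by (induct A rule: infinite_finite_induct) (auto simp: ip_add_right)

lemma vn_nonneg: "vn x \<ge> 0"
  using ip_self_nonneg[of x] by (simp add: vnorm_def)

lemma vn_sq: "vn x ^ 2 = Re (ip x x)"
  using ip_self_nonneg[of x] by (simp add: vnorm_def)

lemma ip_self_eq_vn_sq: "ip x x = complex_of_real (vn x ^ 2)"
  using ip_self_real[of x] by (simp add: vn_sq complex_is_Real_iff)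

lemma vn_eq_0_iff: "vn x = 0 \<longleftrightarrow> x = 0"
  using ip_self_eq_vn_sq[of x] ip_self_eq_0[of x] by auto

lemma vn_zero [simp]: "vn 0 = 0"
  by (simp add: vn_eq_0_iff)

lemma cauchy_schwarz: "cmod (ip x y) \<le> vn x * vn y"
proof (cases "y = 0")
  case True
  then show ?thesis by simp
next
  case False
  define q where "q = vn y ^ 2"
  have q: "q > 0"
    using False vn_eq_0_iff vn_nonneg unfolding q_def by (metis zero_less_power2)
  define p where "p = ip x y"
  define t where "t = p / complex_of_real q"
  have pp: "p * cnj p = complex_of_real (cmod p ^ 2)"
    using complex_norm_square[of p] by simp
  have "ip (x - sc t y) (x - sc t y) = ip x x - cnj t * ip x y - t * ip y x + t * cnj t * ip y y"
    by (simp add: ip_diff_left ip_diff_right ip_scale_left ip_scale_right algebra_simps)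
  also have "\<dots> = ip x x - cnj t * p - t * cnj p + t * cnj t * complex_of_real q"
    using ip_self_eq_vn_sq[of y] ip_commute_cnj[of x y] by (simp add: p_def q_def)
  also have "\<dots> = ip x x - complex_of_real (cmod p ^ 2 / q)"
    using pp q unfolding t_def by (simp add: field_simps)
  finally have "0 \<le> Re (ip x x) - cmod p ^ 2 / q"
    using ip_self_nonneg[of "x - sc t y"] by simp
  then have "cmod p ^ 2 \<le> (vn x * vn y) ^ 2"
    using q vn_sq[of x] unfolding q_def by (simp add: field_simps power_mult_distrib)
  then show ?thesis
    unfolding p_def using vn_nonneg by (meson mult_nonneg_nonneg power2_le_imp_le)
qed

lemma vn_scale: "vn (sc c x) = cmod c * vn x"
proof -
  have "ip (sc c x) (sc c x) = c * cnj c * ip x x"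
    by (simp add: ip_scale_left ip_scale_right mult.assoc)
  also have "\<dots> = complex_of_real ((cmod c * vn x) ^ 2)"
    using ip_self_eq_vn_sq[of x] complex_norm_square[of c] by (simp add: power_mult_distrib)
  finally have "vn (sc c x) ^ 2 = (cmod c * vn x) ^ 2"
    using vn_sq[of "sc c x"] by simp
  then show ?thesis
    using vn_nonneg by (metis norm_ge_zero mult_nonneg_nonneg power2_eq_iff_nonneg)
qed

lemma vn_add: "vn (x + y) \<le> vn x + vn y"
proof -
  have "vn (x + y) ^ 2 = vn x ^ 2 + vn y ^ 2 + 2 * Re (ip x y)"
    using vn_sq[of "x + y"] vn_sq[of x] vn_sq[of y] ip_commute_cnj[of x y]
    by (simp add: ip_add_left ip_add_right)
  also have "\<dots> \<le> (vn x + vn y) ^ 2"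
    using cauchy_schwarz[of x y] abs_Re_le_cmod[of "ip x y"]
    by (simp add: power2_eq_square algebra_simps)
  finally show ?thesis
    using vn_nonneg by (meson add_nonneg_nonneg power2_le_imp_le)
qed

lemma vn_diff: "vn (x - y) \<le> vn x + vn y"
  using vn_add[of x "- y"] vn_scale[of "-1" y] by (simp add: scale_minus_left)

lemma vn_sum: "vn (sum f A) \<le> (\<Sum>i\<in>A. vn (f i))"
proof (induct A rule: infinite_finite_induct)
  case (insert a A)
  then show ?case
    using vn_add[of "f a" "sum f A"] by simp
qed simp_all

subsection \<open>Energy estimates for the Virasoro modes\<close>

lemma L_adjoint: "ip x (L m y) = ip (L (- m) x) y"
  using invariance[of x cv m y] by (simp add: star_cv pmode_cv)

lemma ip_homogeneous_distinct:
  assumes "homogeneous j x" "homogeneous k y" "j \<noteq> k"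
  shows "ip x y = 0"
proof -
  have "of_nat k * ip x y = of_nat j * ip x y"
    using L_adjoint[of x 0 y] assms unfolding homogeneous_def by (simp add: ip_scale_left ip_scale_right)
  then show ?thesis
    using assms(3) by simp
qed

lemma ip_grade_left: "ip (grade j x) y = ip (grade j x) (grade j y)"
proof -
  define S where "S = insert j {k. grade k y \<noteq> 0}"
  have S: "finite S"
    unfolding S_def using finite_grades by simp
  have "y = (\<Sum>k\<in>S. grade k y)"
    by (rule sum_grades) (use S in \<open>auto simp: S_def\<close>)
  then have "ip (grade j x) y = (\<Sum>k\<in>S. ip (grade j x) (grade k y))"
    by (metis ip_sum_right)
  also have "\<dots> = (\<Sum>k\<in>{j}. ip (grade j x) (grade k y))"
    by (rule sum.mono_neutral_right)
      (use S ip_homogeneous_distinct[OF homogeneous_grade homogeneous_grade] in \<open>auto simp: S_def\<close>)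
  finally show ?thesis by simp
qed

lemma ip_V_le_sum_grades:
  assumes "x \<in> V_le (int N)"
  shows "ip x y = (\<Sum>k\<le>N. ip (grade k x) (grade k y))"
proof -
  have "ip x y = (\<Sum>k\<le>N. ip (grade k x) y)"
    by (subst (1) V_le_sum_grades[OF assms]) (rule ip_sum_left)
  then show ?thesis
    using ip_grade_left by simp
qed

lemma grade_L0: "grade k (L 0 x) = sc (of_nat k) (grade k x)"
proof -
  define S where "S = insert k {j. grade j x \<noteq> 0}"
  have S: "finite S"
    unfolding S_def using finite_grades by simp
  have "x = (\<Sum>j\<in>S. grade j x)"
    by (rule sum_grades) (use S in \<open>auto simp: S_def\<close>)
  then have "L 0 x = (\<Sum>j\<in>S. sc (of_nat j) (grade j x))"
    using homogeneous_grade unfolding homogeneous_def by (metis (no_types, lifting) L.sum sum.cong)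
  then have "grade k (L 0 x) = (\<Sum>j\<in>S. sc (of_nat j) (grade k (grade j x)))"
    by (simp add: grade.sum grade.scale)
  also have "\<dots> = (\<Sum>j\<in>S. if j = k then sc (of_nat k) (grade k x) else 0)"
    by (rule sum.cong) (auto simp: grade_grade)
  also have "\<dots> = sc (of_nat k) (grade k x)"
    using S by (simp add: S_def)
  finally show ?thesis .
qed

lemma Re_ip_L0_le:
  assumes "x \<in> V_le (int N)"
  shows "Re (ip x (L 0 x)) \<le> real N * vn x ^ 2"
proof -
  have "ip x (L 0 x) = (\<Sum>k\<le>N. complex_of_real (real k * vn (grade k x) ^ 2))"
    unfolding ip_V_le_sum_grades[OF assms]
    by (rule sum.cong) (auto simp: grade_L0 ip_scale_right ip_self_eq_vn_sq)
  then have "Re (ip x (L 0 x)) = (\<Sum>k\<le>N. real k * vn (grade k x) ^ 2)"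
    by simp
  also have "\<dots> \<le> (\<Sum>k\<le>N. real N * vn (grade k x) ^ 2)"
    by (rule sum_mono) (auto intro: mult_right_mono)
  also have "\<dots> = real N * vn x ^ 2"
    using ip_V_le_sum_grades[OF assms, of x] by (simp add: vn_sq sum_distrib_left)
  finally show ?thesis .
qed

lemma central_term_bound:
  "cmod (central_charge / 12 * (of_int m ^ 3 - of_int m)) \<le> cmod central_charge * \<bar>real_of_int m\<bar> ^ 3"
proof -
  have "\<bar>real_of_int m ^ 3 - real_of_int m\<bar> \<le> 12 * \<bar>real_of_int m\<bar> ^ 3"
  proof (cases "m = 0")
    case False
    then have "1 \<le> \<bar>real_of_int m\<bar>"
      by linarith
    then have "\<bar>real_of_int m\<bar> ^ 1 \<le> \<bar>real_of_int m\<bar> ^ 3"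
      by (intro power_increasing) simp_all
    moreover have "\<bar>real_of_int m ^ 3 - real_of_int m\<bar> \<le> \<bar>real_of_int m\<bar> ^ 3 + \<bar>real_of_int m\<bar>"
      by (metis abs_triangle_ineq4 power_abs)
    ultimately show ?thesis by simp
  qed simp
  moreover have "(of_int m ^ 3 - of_int m :: complex) = complex_of_real (real_of_int m ^ 3 - real_of_int m)"
    by simp
  then have "cmod (central_charge / 12 * (of_int m ^ 3 - of_int m))
      = cmod central_charge / 12 * \<bar>real_of_int m ^ 3 - real_of_int m\<bar>"
    by (simp add: norm_mult norm_divide del: of_real_diff of_real_power)
  ultimately show ?thesis
    by (simp add: divide_le_eq mult.assoc mult_left_mono)
qed

lemma vn_L_neg_sq_le:
  assumes "m \<ge> 0"
  shows "vn (L (- m) u) ^ 2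
    \<le> vn (L m u) ^ 2 + 2 * real_of_int m * Re (ip u (L 0 u)) + cmod central_charge * \<bar>real_of_int m\<bar> ^ 3 * vn u ^ 2"
proof -
  define k where "k = central_charge / 12 * (of_int m ^ 3 - of_int m)"
  have "ip (L (- m) u) (L (- m) u) = ip u (L m (L (- m) u))"
    using L_adjoint[of u m "L (- m) u"] by simp
  also have "L m (L (- m) u) = L (- m) (L m u) + sc (of_int (2 * m)) (L 0 u) + sc k u"
    using virasoro_bracket[of m "- m" u] unfolding k_def by (simp add: algebra_simps)
  also have "ip u \<dots> = ip (L m u) (L m u) + of_int (2 * m) * ip u (L 0 u) + cnj k * ip u u"
    using L_adjoint[of u "- m" "L m u"] by (simp add: ip_add_right ip_scale_right)
  finally have "vn (L (- m) u) ^ 2 = vn (L m u) ^ 2 + 2 * real_of_int m * Re (ip u (L 0 u)) + Re (cnj k) * vn u ^ 2"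
    using vn_sq[of "L (- m) u"] vn_sq[of "L m u"] ip_self_eq_vn_sq[of u] by simp
  moreover have "Re (cnj k) \<le> cmod central_charge * \<bar>real_of_int m\<bar> ^ 3"
    using complex_Re_le_cmod[of "cnj k"] central_term_bound[of m] unfolding k_def[symmetric] by simp
  then have "Re (cnj k) * vn u ^ 2 \<le> cmod central_charge * \<bar>real_of_int m\<bar> ^ 3 * vn u ^ 2"
    by (rule mult_right_mono) simp
  ultimately show ?thesis by simp
qed

definition vir_growth :: "int \<Rightarrow> nat \<Rightarrow> real" where
  "vir_growth m N = 2 * real_of_int m * real N + cmod central_charge * real_of_int m ^ 3"

lemma vir_growth_nonneg: "m \<ge> 0 \<Longrightarrow> vir_growth m N \<ge> 0"
  unfolding vir_growth_def by simp

lemma vir_growth_mono: "0 \<le> m \<Longrightarrow> m \<le> m' \<Longrightarrow> N \<le> N' \<Longrightarrow> vir_growth m N \<le> vir_growth m' N'"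
  unfolding vir_growth_def by (intro add_mono mult_mono mult_left_mono power_mono) auto

lemma vn_L_sq_le: "vn (L m w) ^ 2 \<le> vn w * vn (L (- m) (L m w))"
proof -
  have "vn (L m w) ^ 2 = Re (ip w (L (- m) (L m w)))"
    using vn_sq[of "L m w"] L_adjoint[of w "- m" "L m w"] by simp
  also have "\<dots> \<le> vn w * vn (L (- m) (L m w))"
    using complex_Re_le_cmod[of "ip w (L (- m) (L m w))"] cauchy_schwarz[of w "L (- m) (L m w)"]
    by linarith
  finally show ?thesis .
qed

lemma vn_L_neg_sq_le_of_pos:
  assumes "m \<ge> 0" "u \<in> V_le (int N)" "vn (L m u) ^ 2 \<le> K * vn u ^ 2"
  shows "vn (L (- m) u) ^ 2 \<le> (K + vir_growth m N) * vn u ^ 2"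
proof -
  have "2 * real_of_int m * Re (ip u (L 0 u)) \<le> 2 * real_of_int m * (real N * vn u ^ 2)"
    using Re_ip_L0_le[OF assms(2)] assms(1) by (intro mult_left_mono) auto
  then have "vn (L (- m) u) ^ 2
      \<le> K * vn u ^ 2 + 2 * real_of_int m * (real N * vn u ^ 2) + cmod central_charge * \<bar>real_of_int m\<bar> ^ 3 * vn u ^ 2"
    using vn_L_neg_sq_le[OF assms(1), of u] assms(3) by linarith
  also have "\<dots> = (K + vir_growth m N) * vn u ^ 2"
    using assms(1) unfolding vir_growth_def by (simp add: algebra_simps)
  finally show ?thesis .
qed

lemma vn_L_pos_sq_le:
  assumes "m > 0" "w \<in> V_le (int N)"
  shows "vn (L m w) ^ 2 \<le> (real N + 1) * vir_growth m N * vn w ^ 2"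
  using assms(2)
proof (induction N arbitrary: w rule: less_induct)
  case (less N)
  define u where "u = L m w"
  have u: "u \<in> V_le (int N - m)"
    unfolding u_def by (rule L_V_le[OF less.prems])
  have X: "vir_growth m N \<ge> 0"
    using vir_growth_nonneg assms(1) by simp
  show ?case
  proof (cases "int N < m")
    case True
    then show ?thesis
      using V_le_negative[OF u] X unfolding u_def by simp
  next
    case False
    define N' where "N' = nat (int N - m)"
    have N': "int N' = int N - m" "N' < N"
      using False assms(1) unfolding N'_def by simp_all
    have u': "u \<in> V_le (int N')"
      using u N' by simp
    \<comment> \<open>L_m lowers the degree, so the induction hypothesis applies to u = L_m w\<close>
    have "vn (L (- m) u) ^ 2 \<le> ((real N' + 1) * vir_growth m N' + vir_growth m N') * vn u ^ 2"
      using assms(1) u' less.IH[OF N'(2) u'] by (intro vn_L_neg_sq_le_of_pos) auto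
    also have "\<dots> = (real N' + 2) * vir_growth m N' * vn u ^ 2"
      by (simp add: algebra_simps)
    also have "\<dots> \<le> (real N' + 2) * vir_growth m N * vn u ^ 2"
      using vir_growth_mono[of m m N' N] N' assms(1) by (intro mult_right_mono mult_left_mono) auto
    finally have "vn (L (- m) u) ^ 2 \<le> (real N' + 2) * vir_growth m N * vn u ^ 2" .
    then have "vn u ^ 2 \<le> (real N' + 2) * vir_growth m N * vn w ^ 2"
      by (rule sq_le_of_mult_bound[OF vn_L_sq_le[of m w, folded u_def] _ vn_nonneg vn_nonneg vn_nonneg])
        (use X in simp)
    also have "\<dots> \<le> (real N + 1) * vir_growth m N * vn w ^ 2"
      using N'(2) X by (intro mult_right_mono) auto
    finally show ?thesis
      unfolding u_def .
  qed
qed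

definition L_bound :: "nat \<Rightarrow> nat \<Rightarrow> real" where
  "L_bound N J = (real N + 2) * vir_growth (int J) N + 1"

lemma L_bound_ge_1: "L_bound N J \<ge> 1"
  unfolding L_bound_def using vir_growth_nonneg[of "int J" N] by simp

lemma vn_L_sq_le_L_bound:
  assumes "m \<noteq> 0" "\<bar>m\<bar> \<le> int J" "w \<in> V_le (int N)"
  shows "vn (L m w) ^ 2 \<le> (real N + 2) * vir_growth (int J) N * vn w ^ 2"
proof (cases "m > 0")
  case True
  have "vn (L m w) ^ 2 \<le> (real N + 1) * vir_growth m N * vn w ^ 2"
    by (rule vn_L_pos_sq_le[OF True assms(3)])
  also have "\<dots> \<le> (real N + 2) * vir_growth (int J) N * vn w ^ 2"
    using vir_growth_mono[of m "int J" N N] vir_growth_nonneg[of m N] True assms(2)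
    by (intro mult_right_mono mult_mono) auto
  finally show ?thesis .
next
  case False
  define k where "k = - m"
  have k: "k > 0" "m = - k" "k \<le> int J"
    using False assms(1,2) unfolding k_def by auto
  have "vn (L (- k) w) ^ 2 \<le> ((real N + 1) * vir_growth k N + vir_growth k N) * vn w ^ 2"
    using k(1) assms(3) vn_L_pos_sq_le[OF k(1) assms(3)] by (intro vn_L_neg_sq_le_of_pos) auto
  also have "\<dots> = (real N + 2) * vir_growth k N * vn w ^ 2"
    by (simp add: algebra_simps)
  also have "\<dots> \<le> (real N + 2) * vir_growth (int J) N * vn w ^ 2"
    using vir_growth_mono[of k "int J" N N] k by (intro mult_right_mono mult_left_mono) auto
  finally show ?thesis
    using k(2) by simp
qed

lemma vn_L_le:
  assumes "m \<noteq> 0" "\<bar>m\<bar> \<le> int J" "w \<in> V_le (int N)"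
  shows "vn (L m w) \<le> L_bound N J * vn w"
proof -
  define Q where "Q = (real N + 2) * vir_growth (int J) N"
  have Q: "Q \<ge> 0"
    unfolding Q_def using vir_growth_nonneg[of "int J" N] by simp
  have "vn (L m w) ^ 2 \<le> Q * vn w ^ 2"
    unfolding Q_def by (rule vn_L_sq_le_L_bound[OF assms])
  also have "\<dots> \<le> ((Q + 1) * vn w) ^ 2"
    using Q by (simp add: power_mult_distrib mult_right_mono power2_eq_square algebra_simps)
  finally show ?thesis
    unfolding L_bound_def Q_def[symmetric] using Q vn_nonneg by (meson power2_le_imp_le mult_nonneg_nonneg add_nonneg_nonneg zero_le_one)
qed

subsection \<open>The seminorms\<close>

lemma opnorm_leI:
  assumes "K \<ge> 0" "\<And>x. x \<in> V_le n \<Longrightarrow> vn (R x) \<le> K * vn x"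
  shows "opn n R \<le> ereal K"
  unfolding opnorm_def
proof (rule Sup_least)
  fix y assume "y \<in> {ereal (vn (R b)) |b. b \<in> V_le n \<and> vn b \<le> 1}"
  then obtain b where b: "y = ereal (vn (R b))" "b \<in> V_le n" "vn b \<le> 1"
    by auto
  have "vn (R b) \<le> K * vn b"
    using assms(2) b(2) .
  also have "\<dots> \<le> K"
    using b(3) assms(1) by (simp add: mult_left_le)
  finally show "y \<le> ereal K"
    using b(1) by simp
qed

lemma opnorm_nonneg:
  assumes "R 0 = 0"
  shows "opn n R \<ge> 0"
proof -
  have "ereal (vn (R 0)) \<in> {ereal (vn (R b)) |b. b \<in> V_le n \<and> vn b \<le> 1}"
    using subspace_0[OF subspace_V_le, of n] by auto
  then show ?thesis
    unfolding opnorm_def using assms by (auto intro: Sup_upper2)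
qed

lemma vn_le_opnorm:
  assumes lin: "\<And>c x. R (sc c x) = sc c (R x)"
    and le: "opn n R \<le> ereal A"
    and x: "x \<in> V_le n"
  shows "vn (R x) \<le> A * vn x"
proof (cases "x = 0")
  case True
  then show ?thesis
    using lin[of 0 0] by simp
next
  case False
  then have x_pos: "vn x > 0"
    using vn_eq_0_iff vn_nonneg by (metis less_eq_real_def)
  define y where "y = sc (complex_of_real (1 / vn x)) x"
  have "vn y = 1" "y \<in> V_le n"
    unfolding y_def vn_scale using x_pos x subspace_scale[OF subspace_V_le] by (simp_all add: norm_divide)
  then have "ereal (vn (R y)) \<le> opn n R"
    unfolding opnorm_def by (intro Sup_upper) auto
  then have "vn (R y) \<le> A"
    using le by (metis ereal_less_eq(3) order_trans)
  moreover have "vn (R y) = vn (R x) / vn x"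
    unfolding y_def lin vn_scale using x_pos by (simp add: norm_divide)
  ultimately show ?thesis
    using x_pos by (simp add: divide_le_eq mult.commute)
qed

lemma opnorm_le_mult_opnorm:
  assumes lin: "\<And>c x. S (sc c x) = sc c (S x)"
    and R0: "R 0 = 0" and P: "P > 0"
    and bound: "\<And>A x. A \<ge> 0 \<Longrightarrow> (\<And>y. y \<in> V_le m \<Longrightarrow> vn (S y) \<le> A * vn y) \<Longrightarrow> x \<in> V_le n
      \<Longrightarrow> vn (R x) \<le> P * A * vn x"
  shows "opn n R \<le> ereal P * opn m S"
proof -
  have S_nonneg: "opn m S \<ge> 0"
    using lin[of 0 0] by (intro opnorm_nonneg) simp
  show ?thesis
  proof (cases "opn m S")
    case (real A)
    then have A: "A \<ge> 0"
      using S_nonneg by simp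
    have "vn (S y) \<le> A * vn y" if "y \<in> V_le m" for y
      using vn_le_opnorm[OF lin _ that] real by simp
    then have "opn n R \<le> ereal (P * A)"
      using P A bound[OF A] by (intro opnorm_leI) auto
    then show ?thesis
      using real by simp
  qed (use P S_nonneg in auto)
qed

subsection \<open>Modes of a primary vector\<close>

lemma primary_commutator:
  assumes "homogeneous da a" "\<forall>k>0. L k a = 0"
  shows "sc (of_int j * (of_nat da - 1)) (md a (j + int da - 1) c)
       = L j (md a (int da - 1) c) - md a (int da - 1) (L j c)"
proof -
  have "md cv (int i) a = 0" if "i \<ge> 2" for i
  proof -
    have "L (int i - 1) a = 0"
      using assms(2) that by simp
    then show ?thesis
      by (simp add: L_eq_md)
  qed
  then have "md cv (j + 1) (md a (int da - 1) c) - md a (int da - 1) (md cv (j + 1) c)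
     = md (md cv 0 a) (j + 1 + (int da - 1)) c
       + sc (of_int (j + 1)) (md (md cv 1 a) (j + 1 + (int da - 1) - 1) c)"
    by (intro commutator_formula_two_terms) simp
  also have "md cv 0 a = L (-1) a"
    by (simp add: L_eq_md)
  also have "md cv 1 a = sc (of_nat da) a"
    using assms(1) by (simp add: L_eq_md homogeneous_def)
  also have "md (L (-1) a) (j + 1 + (int da - 1)) c = sc (- of_int (j + int da)) (md a (j + int da - 1) c)"
    by (simp add: translation algebra_simps)
  finally have "L j (md a (int da - 1) c) - md a (int da - 1) (L j c)
      = sc (- of_int (j + int da) + of_int (j + 1) * of_nat da) (md a (j + int da - 1) c)"
    by (simp add: L_eq_md md_left.scale scale_left_distrib)
  also have "- of_int (j + int da) + of_int (j + 1) * of_nat da = (of_int j * (of_nat da - 1) :: complex)"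
    by (simp add: algebra_simps)
  finally show ?thesis by simp
qed

lemma primary_mode_bound:
  assumes a: "homogeneous da a" "\<forall>k>0. L k a = 0" "da \<noteq> 1"
    and A: "A \<ge> 0" "\<And>y. y \<in> V_le (int N) \<Longrightarrow> vn (md a (int da - 1) y) \<le> A * vn y"
    and j: "\<bar>j\<bar> \<le> int J"
    and y: "y \<in> V_le (int N)" "L j y \<in> V_le (int N)"
  shows "vn (md a (j + int da - 1) y) \<le> 2 * A * L_bound N J * vn y"
proof (cases "j = 0")
  case True
  have "A * vn y \<le> (2 * L_bound N J) * (A * vn y)"
    using L_bound_ge_1[of N J] A(1) vn_nonneg[of y] by (simp add: mult_le_cancel_right1 not_less)
  then show ?thesis
    using A(2)[OF y(1)] True by (simp add: algebra_simps)
next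
  case False
  define a0 where "a0 = md a (int da - 1)"
  define q where "q = (of_int j * (of_nat da - 1) :: complex)"
  \<comment> \<open>the factor j (d_a - 1) is a nonzero integer, which is where d_a \<noteq> 1 enters\<close>
  have "q = of_int (j * (int da - 1))"
    unfolding q_def by simp
  then have q: "cmod q \<ge> 1"
    by (simp only:) (rule one_le_norm_of_int, use False a(3) in simp)
  have a0y: "a0 y \<in> V_le (int N)"
    using md_V_le[OF a(1) y(1), of "int da - 1"] unfolding a0_def by simp
  have "vn (md a (j + int da - 1) y) \<le> cmod q * vn (md a (j + int da - 1) y)"
    using q vn_nonneg[of "md a (j + int da - 1) y"] by (simp add: mult_le_cancel_right1 not_less)
  also have "\<dots> = vn (L j (a0 y) - a0 (L j y))"
    using primary_commutator[OF a(1,2), of j y] vn_scale[of q "md a (j + int da - 1) y"]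
    unfolding q_def a0_def by simp
  also have "\<dots> \<le> vn (L j (a0 y)) + vn (a0 (L j y))"
    by (rule vn_diff)
  also have "\<dots> \<le> L_bound N J * (A * vn y) + A * (L_bound N J * vn y)"
  proof (rule add_mono)
    have "vn (L j (a0 y)) \<le> L_bound N J * vn (a0 y)"
      by (rule vn_L_le[OF False j a0y])
    also have "\<dots> \<le> L_bound N J * (A * vn y)"
      using A(2)[OF y(1)] L_bound_ge_1[of N J] unfolding a0_def by (intro mult_left_mono) auto
    finally show "vn (L j (a0 y)) \<le> L_bound N J * (A * vn y)" .
    have "vn (a0 (L j y)) \<le> A * vn (L j y)"
      unfolding a0_def by (rule A(2)[OF y(2)])
    also have "\<dots> \<le> A * (L_bound N J * vn y)"
      using vn_L_le[OF False j y(1)] A(1) by (rule mult_left_mono)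
    finally show "vn (a0 (L j y)) \<le> A * (L_bound N J * vn y)" .
  qed
  finally show ?thesis
    by (simp add: algebra_simps)
qed

subsection \<open>Modes of b_{-p} a\<close>

lemma associativity_expansion:
  assumes b: "homogeneous d b" and a: "homogeneous da a" and c: "c \<in> V_le (int n)"
    and q: "int da - 1 \<le> q"
  shows "md (md b k a) q c = (\<Sum>i\<le>n + d. sc ((-1)^i * (of_int k gchoose i))
            (md b (k - int i) (md a (q + int i) c)
             - sc ((-1) powi k) (md a (q + k - int i) (md b (int i) c))))"
    (is "_ = (\<Sum>i\<le>n + d. ?F i)")
proof -
  obtain N0 where N0: "\<forall>N\<ge>N0.
      (\<Sum>i\<le>N. sc (of_int 0 gchoose i) (md (md b (k + int i) a) (0 + q - int i) c)) =
      (\<Sum>i\<le>N. sc ((-1)^i * (of_int k gchoose i))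
          (md b (0 + k - int i) (md a (q + int i) c)
           - sc ((-1) powi k) (md a (q + k - int i) (md b (0 + int i) c))))"
    using borcherds[where a=b and b=a and c=c and m=0 and n=q and k=k] by blast
  have "(\<Sum>i\<le>N. sc (of_int 0 gchoose i) (md (md b (k + int i) a) (0 + q - int i) c)) = md (md b k a) q c" for N
    by (subst sum_atMost_only_first) (auto simp: gbinomial_0_left)
  with N0 have "md (md b k a) q c = (\<Sum>i\<le>max N0 (n + d). ?F i)"
    by simp
  also have "\<dots> = (\<Sum>i\<le>n + d. ?F i)"
  proof (rule sum.mono_neutral_right)
    \<comment> \<open>beyond i = n + d both inner vectors have negative degree\<close>
    show "\<forall>i\<in>{..max N0 (n + d)} - {..n + d}. ?F i = 0"
    proof
      fix i assume "i \<in> {..max N0 (n + d)} - {..n + d}"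
      then have i: "i > n + d" by simp
      have "md a (q + int i) c = 0"
        using md_V_le[OF a c, of "q + int i"] i q by (intro V_le_negative) auto
      moreover have "md b (int i) c = 0"
        using md_V_le[OF b c, of "int i"] i by (intro V_le_negative) auto
      ultimately show "?F i = 0"
        by simp
    qed
  qed auto
  finally show ?thesis .
qed

definition mode_product_bound :: "nat \<Rightarrow> nat \<Rightarrow> real \<Rightarrow> real \<Rightarrow> real \<Rightarrow> nat \<Rightarrow> real" where
  "mode_product_bound d p Cb t s n =
     4 * (real n + real d + 1) ^ (nat \<bar>int d - 1 - int p\<bar> + 1) * L_bound (n + d) (n + d + p + 1)
       * (Cb * (real n + (2 + real d + real p)) powr t * (real n + 1) powr s)"

lemma polynomially_bounded_mode_product_bound:
  assumes "t \<ge> 0" "s \<ge> 0"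
  shows "polynomially_bounded (mode_product_bound d p Cb t s)"
  unfolding mode_product_bound_def L_bound_def vir_growth_def using assms
  by (simp add: polynomially_bounded_intros)

context
  fixes b :: 'v and d :: nat and Cb t s :: real
  assumes b_homogeneous: "homogeneous d b"
    and b_energy_bounds: "\<And>m M. opn M (pmode sc md cv b m)
      \<le> ereal (Cb * (1 + \<bar>real_of_int m\<bar>) powr t * (1 + \<bar>real_of_int M\<bar>) powr s)"
    and energy_exponents: "Cb \<ge> 0" "t \<ge> 0" "s \<ge> 0"
begin

lemma vn_md_b_le:
  assumes y: "y \<in> V_le (int M)" and "M \<le> n" and Z: "1 + \<bar>real_of_int (j - int d + 1)\<bar> \<le> Z"
  shows "vn (md b j y) \<le> Cb * Z powr t * (real n + 1) powr s * vn y"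
proof -
  have "pmode sc md cv b (j - int d + 1) = md b j"
    using pmode_homogeneous[OF b_homogeneous] by simp
  then have "opn (int M) (md b j) \<le> ereal (Cb * (1 + \<bar>real_of_int (j - int d + 1)\<bar>) powr t * (1 + real M) powr s)"
    using b_energy_bounds[where m="j - int d + 1" and M="int M"] by simp
  then have "vn (md b j y) \<le> Cb * (1 + \<bar>real_of_int (j - int d + 1)\<bar>) powr t * (1 + real M) powr s * vn y"
    by (rule vn_le_opnorm[where R="md b j", OF md.scale _ y])
  also have "\<dots> \<le> Cb * Z powr t * (real n + 1) powr s * vn y"
    using assms energy_exponents vn_nonneg[of y]
    by (intro mult_right_mono mult_mono mult_left_mono powr_mono2) auto
  finally show ?thesis .
qed

context
  fixes a :: 'v and da n p :: nat and A :: real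
  assumes a_primary: "homogeneous da a" "\<forall>k>0. L k a = 0" "da \<noteq> 1"
    and a_zero_mode: "A \<ge> 0" "\<And>y. y \<in> V_le (int (n + d)) \<Longrightarrow> vn (md a (int da - 1) y) \<le> A * vn y"
begin

lemma vn_b_after_a_le:
  assumes "i \<le> n + d" "c \<in> V_le (int n)"
  shows "vn (md b (int d - 1 - int p - int i) (md a (int da + int p - 1 + int i) c))
    \<le> Cb * (real n + (2 + real d + real p)) powr t * (real n + 1) powr s
       * (2 * A * L_bound (n + d) (n + d + p + 1) * vn c)"
proof -
  have c: "c \<in> V_le (int (n + d))"
    using V_le_mono[OF assms(2)] by simp
  have Lc: "L (int p + int i) c \<in> V_le (int (n + d))"
    using V_le_mono[OF L_V_le[OF assms(2)]] by simp
  have "md a (int da + int p - 1 + int i) c \<in> V_le (int n)"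
    using V_le_mono[OF md_V_le[OF a_primary(1) assms(2)]] by simp
  then have "vn (md b (int d - 1 - int p - int i) (md a (int da + int p - 1 + int i) c))
      \<le> Cb * (real n + (2 + real d + real p)) powr t * (real n + 1) powr s
         * vn (md a (int da + int p - 1 + int i) c)"
    using assms(1) by (intro vn_md_b_le) auto
  also have "\<dots> \<le> Cb * (real n + (2 + real d + real p)) powr t * (real n + 1) powr s
       * (2 * A * L_bound (n + d) (n + d + p + 1) * vn c)"
    using primary_mode_bound[where N="n + d" and j="int p + int i" and J="n + d + p + 1" and y=c, OF a_primary a_zero_mode]
      assms(1) c Lc energy_exponents
    by (intro mult_left_mono) (simp_all add: algebra_simps)
  finally show ?thesis .
qed

lemma vn_a_after_b_le:
  assumes "i \<le> n + d" "c \<in> V_le (int n)"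
  shows "vn (md a (int da + int p - 1 + (int d - 1 - int p) - int i) (md b (int i) c))
    \<le> 2 * A * L_bound (n + d) (n + d + p + 1)
       * (Cb * (real n + (2 + real d + real p)) powr t * (real n + 1) powr s * vn c)"
proof -
  have y: "md b (int i) c \<in> V_le (int n + int d - int i - 1)"
    using md_V_le[OF b_homogeneous assms(2)] by simp
  have "vn (md a ((int d - 1 - int i) + int da - 1) (md b (int i) c))
      \<le> 2 * A * L_bound (n + d) (n + d + p + 1) * vn (md b (int i) c)"
    using assms(1) V_le_mono[OF y] V_le_mono[OF L_V_le[OF y]]
    by (intro primary_mode_bound[where N="n + d", OF a_primary a_zero_mode]) auto
  also have "\<dots> \<le> 2 * A * L_bound (n + d) (n + d + p + 1)
       * (Cb * (real n + (2 + real d + real p)) powr t * (real n + 1) powr s * vn c)"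
    using assms a_zero_mode(1) L_bound_ge_1[of "n + d" "n + d + p + 1"]
    by (intro mult_left_mono vn_md_b_le) auto
  finally show ?thesis
    by (simp add: algebra_simps)
qed

lemma vn_md_product_le:
  assumes c: "c \<in> V_le (int n)"
  shows "vn (md (md b (int d - 1 - int p) a) (int da + int p - 1) c) \<le> A * mode_product_bound d p Cb t s n * vn c"
proof -
  define \<kappa> where "\<kappa> = int d - 1 - int p"
  define \<Lambda> where "\<Lambda> = L_bound (n + d) (n + d + p + 1)"
  define E where "E = Cb * (real n + (2 + real d + real p)) powr t * (real n + 1) powr s"
  define T1 where "T1 i = md b (\<kappa> - int i) (md a (int da + int p - 1 + int i) c)" for i
  define T2 where "T2 i = md a (int da + int p - 1 + \<kappa> - int i) (md b (int i) c)" for i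
  define B where "B = (real n + real d + 1) ^ nat \<bar>\<kappa>\<bar> * (4 * A * \<Lambda> * E * vn c)"
  have "vn (md (md b \<kappa> a) (int da + int p - 1) c)
      \<le> (\<Sum>i\<le>n + d. vn (sc ((-1)^i * (of_int \<kappa> gchoose i)) (T1 i - sc ((-1) powi \<kappa>) (T2 i))))"
    unfolding associativity_expansion[OF b_homogeneous a_primary(1) c, of "int da + int p - 1", simplified]
      T1_def T2_def
    by (rule vn_sum)
  also have "\<dots> \<le> (\<Sum>i\<le>n + d. B)"
  proof (rule sum_mono)
    fix i assume "i \<in> {..n + d}"
    then have i: "i \<le> n + d" by simp
    have "cmod ((-1)^i * (of_int \<kappa> gchoose i) :: complex) \<le> (real i + 1) ^ nat \<bar>\<kappa>\<bar>"
      by (simp add: norm_mult norm_power norm_gbinomial_of_int_le)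
    also have "\<dots> \<le> (real n + real d + 1) ^ nat \<bar>\<kappa>\<bar>"
      using i by (intro power_mono) auto
    finally have binomial: "cmod ((-1)^i * (of_int \<kappa> gchoose i) :: complex) \<le> (real n + real d + 1) ^ nat \<bar>\<kappa>\<bar>" .
    have "vn (T1 i - sc ((-1) powi \<kappa>) (T2 i)) \<le> vn (T1 i) + vn (T2 i)"
      using vn_diff[of "T1 i" "sc ((-1) powi \<kappa>) (T2 i)"] by (simp add: vn_scale norm_power_int)
    also have "\<dots> \<le> E * (2 * A * \<Lambda> * vn c) + 2 * A * \<Lambda> * (E * vn c)"
      using vn_b_after_a_le[OF i c] vn_a_after_b_le[OF i c]
      unfolding T1_def T2_def \<kappa>_def \<Lambda>_def E_def by (rule add_mono)
    also have "\<dots> = 4 * A * \<Lambda> * E * vn c"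
      by (simp add: algebra_simps)
    finally show "vn (sc ((-1)^i * (of_int \<kappa> gchoose i)) (T1 i - sc ((-1) powi \<kappa>) (T2 i))) \<le> B"
      unfolding vn_scale B_def using binomial vn_nonneg by (intro mult_mono) auto
  qed
  also have "\<dots> = A * mode_product_bound d p Cb t s n * vn c"
    unfolding B_def mode_product_bound_def \<kappa>_def \<Lambda>_def E_def by (simp add: algebra_simps)
  finally show ?thesis
    unfolding \<kappa>_def .
qed

end

lemma opnorm_md_product_le:
  assumes a: "homogeneous da a" "\<forall>k>0. L k a = 0" "da \<noteq> 1"
    and P: "P > 0" "\<And>n0. n = int n0 \<Longrightarrow> mode_product_bound d p Cb t s n0 \<le> P"
  shows "opn n (md (md b (int d - 1 - int p) a) (int da + int p - 1)) \<le> ereal P * opn (n + int d) (md a (int da - 1))"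
proof (rule opnorm_le_mult_opnorm[OF md.scale _ P(1)])
  fix A x
  assume A: "A \<ge> 0" "\<And>y. y \<in> V_le (n + int d) \<Longrightarrow> vn (md a (int da - 1) y) \<le> A * vn y"
    and x: "x \<in> V_le n"
  show "vn (md (md b (int d - 1 - int p) a) (int da + int p - 1) x) \<le> P * A * vn x"
  proof (cases "n < 0")
    case True
    then show ?thesis
      using V_le_negative[OF x] by simp
  next
    case False
    then obtain n0 where n0: "n = int n0"
      by (metis nonneg_int_cases not_less)
    have "vn (md (md b (int d - 1 - int p) a) (int da + int p - 1) x)
        \<le> A * mode_product_bound d p Cb t s n0 * vn x"
      using vn_md_product_le[OF a A(1), of n0] A(2) x n0 by simp
    also have "\<dots> \<le> A * P * vn x"
      using P(2)[OF n0] A(1) vn_nonneg[of x] by (intro mult_right_mono mult_left_mono)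
    finally show ?thesis
      by (simp add: algebra_simps)
  qed
qed simp

end

lemma opnorm_product_mode_le:
  assumes b: "homogeneous d b" "energy_bounded sc md cv ip b"
    and a: "primary sc md cv a da" "da \<noteq> 1"
  shows "\<exists>C r. C \<ge> 0 \<and> r \<ge> 0 \<and>
           (\<forall>n. opn n (pmode sc md cv (pmode sc md cv b (- int p) a) 0)
              \<le> ereal (C * (1 + \<bar>real_of_int n\<bar>) powr r) * opn (n + int d) (pmode sc md cv a 0))"
proof -
  obtain s Cb t where energy: "s \<ge> 0" "Cb \<ge> 0" "t \<ge> 0" "\<And>m M. opn M (pmode sc md cv b m)
      \<le> ereal (Cb * (1 + \<bar>real_of_int m\<bar>) powr t * (1 + \<bar>real_of_int M\<bar>) powr s)"
    using b(2) unfolding energy_bounded_def by blast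
  obtain C r where C: "C \<ge> 0" "r \<ge> 0" "\<And>n. \<bar>mode_product_bound d p Cb t s n\<bar> \<le> C * (1 + real n) powr r"
    using polynomially_bounded_mode_product_bound[OF energy(3,1)] unfolding polynomially_bounded_def by blast
  have a_primary: "homogeneous da a" "\<forall>k>0. L k a = 0"
    using a(1) unfolding primary_def homogeneous_def by auto
  have "homogeneous (da + p) (md b (int d - 1 - int p) a)"
    unfolding homogeneous_def using L0_md_homogeneous[OF b(1) a_primary(1)] by simp
  then have R: "pmode sc md cv (pmode sc md cv b (- int p) a) 0 = md (md b (int d - 1 - int p) a) (int da + int p - 1)"
    using pmode_homogeneous b(1) by (simp add: algebra_simps)
  have a0: "pmode sc md cv a 0 = md a (int da - 1)"
    using pmode_homogeneous[OF a_primary(1)] by simp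
  have "mode_product_bound d p Cb t s n0 \<le> (C + 1) * (1 + \<bar>real_of_int n\<bar>) powr r" if "n = int n0" for n n0
  proof -
    have n: "\<bar>real_of_int n\<bar> = real n0"
      using that by simp
    show ?thesis
      using C(3)[of n0] abs_ge_self[of "mode_product_bound d p Cb t s n0"] powr_ge_zero[of "1 + real n0" r]
      unfolding n distrib_right by linarith
  qed
  then have "opn n (pmode sc md cv (pmode sc md cv b (- int p) a) 0)
      \<le> ereal ((C + 1) * (1 + \<bar>real_of_int n\<bar>) powr r) * opn (n + int d) (pmode sc md cv a 0)" for n
    unfolding R a0 using C(1)
    by (intro opnorm_md_product_le[OF b(1) energy(4) energy(2,3,1) a_primary a(2)]) (auto intro!: mult_pos_pos)
  moreover have "C + 1 \<ge> 0"
    using C(1) by simp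
  ultimately show ?thesis
    using C(2) by blast
qed

end

theorem mainTheorem10:
  fixes sc :: "complex \<Rightarrow> 'v::ab_group_add \<Rightarrow> 'v"
    and md :: "'v \<Rightarrow> int \<Rightarrow> 'v \<Rightarrow> 'v"
    and vac cv :: 'v
    and ip :: "'v \<Rightarrow> 'v \<Rightarrow> complex"
    and star :: "'v \<Rightarrow> 'v"
    and a b :: 'v
    and d da p :: nat
  assumes "is_simple_unitary_CFT_VOA sc md vac cv ip star"
    and "Vir md cv 0 b = sc (of_nat d) b"
    and "energy_bounded sc md cv ip b"
    and "primary sc md cv a da"
    and "da \<noteq> 1"
  shows "\<exists>C r::real. C \<ge> 0 \<and> r \<ge> 0 \<and>
           (\<forall>n::int. opnorm sc md cv ip n (pmode sc md cv (pmode sc md cv b (- int p) a) 0)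
              \<le> ereal (C * (1 + \<bar>real_of_int n\<bar>) powr r)
                 * opnorm sc md cv ip (n + int d) (pmode sc md cv a 0))"
proof -
  interpret unitary_voa sc md vac cv ip star
    using assms(1) by (rule unitary_voa_if_simple_unitary_CFT_VOA)
  show ?thesis
    using opnorm_product_mode_le[OF _ assms(3-5)] assms(2) unfolding homogeneous_def by blast
qed

end
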